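(* There exist a finite action set $\mathcal{A}$, a utility function $u:\mathcal{A}\times\{0,1\}\to[-1,1]$ and a constant $c>0$ such that for infinitely many horizons $T$ there are outcomes $\mathbf{x}\in\{0,1\}^T$ and forecasts $\mathbf{p}\in[0,1]^T$ with $$\mathrm{Reg}(\mathbf{p},\mathbf{x})\le -cT \quad\text{and}\quad \mathrm{AgentReg}_u(\mathbf{p},\mathbf{x})\ge cT.$$ (That is, $\mathrm{Reg}(\mathbf p,\mathbf x)=-\Omega(T)$ while $\mathrm{AgentReg}_u(\mathbf p,\mathbf x)=\Omega(T)$.)
   Context: Binary setting. For outcomes $\mathbf{x}=(x_1,\dots,x_T)\in\{0,1\}^T$ and forecasts $\mathbf{p}=(p_1,\dots,p_T)\in[0,1]^T$, the base rate is $\beta=\frac1T\sum_{t=1}^T x_t$. For a scoring rule $\ell:[0,1]\times\{0,1\}\to\mathbb{R}$, $\mathrm{Reg}_\ell(\mathbf p,\mathbf x)=\sum_{t=1}^T\ell(p_t,x_t)-\sum_{t=1}^T\ell(\beta,x_t)$. The Brier score is $\ell_{sq}(p,x)=(x-p)^2$ and $\mathrm{Reg}(\mathbf p,\mathbf x)=\mathrm{Reg}_{\ell_{sq}}(\mathbf p,\mathbf x)$. An agent with finite action set $\mathcal A$ and utility $u:\mathcal A\times\{0,1\}\to[-1,1]$ responds to a forecast $p$ with an action $a(p)\in\arg\max_{a\in\mathcal A}\mathbb{E}_{x\sim\mathrm{Ber}(p)}[u(a,x)]$ (fixed tie-breaking), and $\mathrm{AgentReg}_u(\mathbf p,\mathbf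 x)=\sum_{t=1}^T u(a(\beta),x_t)-\sum_{t=1}^T u(a(p_t),x_t)$. *)

theory Defs
  imports Complex_Main
begin

text \<open>Outcomes are x :: nat \<Rightarrow> nat with x t \<in> {0,1} for t < T; forecasts p :: nat \<Rightarrow> real
  with p t \<in> [0,1]; rounds are indexed by t \<in> {0..<T}.\<close>

definition base_rate :: "nat \<Rightarrow> (nat \<Rightarrow> nat) \<Rightarrow> real" where
  "base_rate T x = (\<Sum>t<T. real (x t)) / real T"

definition brier :: "real \<Rightarrow> nat \<Rightarrow> real" where
  "brier p x = (real x - p)^2"

definition Reg :: "nat \<Rightarrow> (nat \<Rightarrow> real) \<Rightarrow> (nat \<Rightarrow> nat) \<Rightarrow> real" where
  "Reg T p x = (\<Sum>t<T. brier (p t) (x t)) - (\<Sum>t<T. brier (base_rate T x) (x t))"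

definition exp_util :: "('a \<Rightarrow> nat \<Rightarrow> real) \<Rightarrow> 'a \<Rightarrow> real \<Rightarrow> real" where
  "exp_util u a p = p * u a 1 + (1 - p) * u a 0"

definition best_response :: "'a set \<Rightarrow> ('a \<Rightarrow> nat \<Rightarrow> real) \<Rightarrow> (real \<Rightarrow> 'a) \<Rightarrow> bool" where
  "best_response A u ar \<longleftrightarrow>
     (\<forall>p\<in>{0..1}. ar p \<in> A \<and> (\<forall>b\<in>A. exp_util u b p \<le> exp_util u (ar p) p))"

definition AgentReg :: "('a \<Rightarrow> nat \<Rightarrow> real) \<Rightarrow> (real \<Rightarrow> 'a) \<Rightarrow> nat \<Rightarrow> (nat \<Rightarrow> real) \<Rightarrow> (nat \<Rightarrow> nat) \<Rightarrow> real" where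
  "AgentReg u ar T p x =
     (\<Sum>t<T. u (ar (base_rate T x)) (x t)) - (\<Sum>t<T. u (ar (p t)) (x t))"

end

theory Submission
  imports Defs "HOL-Library.Infinite_Set"
begin

text \<open>
  Repeating a block of rounds k times multiplies both regrets by k, so it suffices to find a
  single block of four rounds with negative Brier regret and positive agent regret. The agent
  can abstain (utility 0) or bet on either outcome (win 1/2, lose 3/5); she bets only when
  the forecast leaves [5/11, 6/11], so at the base rate 1/2 she abstains. The forecasts
  (1, 0, 2/5, 3/5) for the outcomes (1, 0, 1, 0) beat the base rate in Brier score (18/25
  against 1), yet the two hedged forecasts make her lose both bets they trigger, and the two
  losses of 3/5 outweigh the two wins of 1/2.
\<close>

lemma sum_lessThan_mult_mod:
  fixes f :: "nat \<Rightarrow> 'a :: comm_semiring_1"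
  shows "(\<Sum>t<k * n. f (t mod n)) = of_nat k * (\<Sum>j<n. f j)"
proof (induction k)
  case 0
  then show ?case by simp
next
  case (Suc k)
  have "{..<Suc k * n} = {..<k * n} \<union> {k * n..<k * n + n}"
    by (auto simp: algebra_simps)
  then have "(\<Sum>t<Suc k * n. f (t mod n)) = (\<Sum>t<k * n. f (t mod n)) + (\<Sum>t=k * n..<k * n + n. f (t mod n))"
    by (simp add: sum.union_disjoint ivl_disj_int)
  also have "(\<Sum>t=k * n..<k * n + n. f (t mod n)) = (\<Sum>j<n. f j)"
    using sum.shift_bounds_nat_ivl[of "\<lambda>t. f (t mod n)" 0 "k * n" n]
    by (simp add: atLeast0LessThan add.commute)
  finally show ?case
    using Suc.IH by (simp add: algebra_simps)
qed

lemma base_rate_periodic: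
  assumes "k > 0"
  shows "base_rate (k * n) (\<lambda>t. x (t mod n)) = base_rate n x"
  using assms by (simp add: base_rate_def sum_lessThan_mult_mod[where f = "\<lambda>j. real (x j)"])

lemma Reg_periodic:
  assumes "k > 0"
  shows "Reg (k * n) (\<lambda>t. p (t mod n)) (\<lambda>t. x (t mod n)) = real k * Reg n p x"
  using sum_lessThan_mult_mod[where f = "\<lambda>j. brier (p j) (x j)"]
    sum_lessThan_mult_mod[where f = "\<lambda>j. brier (base_rate n x) (x j)"]
  by (simp add: Reg_def base_rate_periodic[OF assms] right_diff_distrib)

lemma AgentReg_periodic:
  assumes "k > 0"
  shows "AgentReg u ar (k * n) (\<lambda>t. p (t mod n)) (\<lambda>t. x (t mod n)) = real k * AgentReg u ar n p x"
  using sum_lessThan_mult_mod[where f = "\<lambda>j. u (ar (p j)) (x j)"]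
    sum_lessThan_mult_mod[where f = "\<lambda>j. u (ar (base_rate n x)) (x j)"]
  by (simp add: AgentReg_def base_rate_periodic[OF assms] right_diff_distrib)

lemma best_response_strict_maximizer:
  assumes "best_response A u ar" and "p \<in> {0..1}" and "a \<in> A"
    and "\<And>b. b \<in> A \<Longrightarrow> b \<noteq> a \<Longrightarrow> exp_util u b p < exp_util u a p"
  shows "ar p = a"
  using assms unfolding best_response_def by force

definition bet_utility :: "nat \<Rightarrow> nat \<Rightarrow> real" where
  "bet_utility a y =
     (if a = 1 then (if y = 1 then 1/2 else -3/5)
      else if a = 2 then (if y = 0 then 1/2 else -3/5)
      else 0)"

definition block_outcomes :: "nat \<Rightarrow> nat" where
  "block_outcomes j = (if j = 0 \<or> j = 2 then 1 else 0)"

definition block_forecasts :: "nat \<Rightarrow> real" where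
  "block_forecasts j = (if j = 0 then 1 else if j = 1 then 0 else if j = 2 then 2/5 else 3/5)"

lemma bet_utility_bounded: "a \<in> {0, 1, 2} \<Longrightarrow> y \<in> {0, 1} \<Longrightarrow> bet_utility a y \<in> {-1..1}"
  by (auto simp: bet_utility_def)

lemma best_response_bet_utility:
  assumes "best_response {0, 1, 2} bet_utility ar"
  shows "ar (1/2) = 0" "ar 1 = 1" "ar 0 = 2" "ar (2/5) = 2" "ar (3/5) = 1"
  by (rule best_response_strict_maximizer[OF assms]; force simp: exp_util_def bet_utility_def)+

lemma base_rate_block: "base_rate 4 block_outcomes = 1/2"
  by (simp add: base_rate_def block_outcomes_def eval_nat_numeral)

lemma Reg_block: "Reg 4 block_forecasts block_outcomes = -7/25"
  unfolding Reg_def base_rate_block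
  by (simp add: brier_def block_outcomes_def block_forecasts_def eval_nat_numeral power2_eq_square)

lemma AgentReg_block:
  assumes "best_response {0, 1, 2} bet_utility ar"
  shows "AgentReg bet_utility ar 4 block_forecasts block_outcomes = 1/5"
  using best_response_bet_utility[OF assms] unfolding AgentReg_def base_rate_block
  by (simp add: bet_utility_def block_outcomes_def block_forecasts_def eval_nat_numeral)

theorem theorem3p1:
  shows "\<exists>(A :: nat set) (u :: nat \<Rightarrow> nat \<Rightarrow> real) (c :: real).
           finite A \<and> A \<noteq> {} \<and> c > 0 \<and>
           (\<forall>a\<in>A. \<forall>y\<in>{0,1}. u a y \<in> {-1..1}) \<and>
           (\<forall>ar. best_response A u ar \<longrightarrow>
              infinite {T :: nat. \<exists>(x :: nat \<Rightarrow> nat) (p :: nat \<Rightarrow> real).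
                 (\<forall>t<T. x t \<in> {0,1} \<and> p t \<in> {0..1}) \<and>
                 Reg T p x \<le> - c * real T \<and>
                 AgentReg u ar T p x \<ge> c * real T})"
proof (intro exI[of _ "{0, 1, 2}"] exI[of _ bet_utility] exI[of _ "1/20"] conjI allI impI)
  show "\<forall>a\<in>{0, 1, 2}. \<forall>y\<in>{0, 1}. bet_utility a y \<in> {-1..1}"
    using bet_utility_bounded by blast
  fix ar
  assume br: "best_response {0, 1, 2} bet_utility ar"
  let ?x = "\<lambda>t. block_outcomes (t mod 4)" and ?p = "\<lambda>t. block_forecasts (t mod 4)"
  have "\<exists>T\<ge>m. \<exists>x p. (\<forall>t<T. x t \<in> {0, 1} \<and> p t \<in> {0..1}) \<and>
          Reg T p x \<le> - (1/20) * real T \<and> AgentReg bet_utility ar T p x \<ge> (1/20) * real T"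
    for m
  proof (intro exI[of _ "Suc m * 4"] exI[of _ ?x] exI[of _ ?p] conjI allI impI)
    show "Reg (Suc m * 4) ?p ?x \<le> - (1/20) * real (Suc m * 4)"
      unfolding Reg_periodic[OF zero_less_Suc] Reg_block by simp
    show "AgentReg bet_utility ar (Suc m * 4) ?p ?x \<ge> (1/20) * real (Suc m * 4)"
      unfolding AgentReg_periodic[OF zero_less_Suc] AgentReg_block[OF br] by simp
  qed (auto simp: block_outcomes_def block_forecasts_def)
  then show "infinite {T. \<exists>x p. (\<forall>t<T. x t \<in> {0, 1} \<and> p t \<in> {0..1}) \<and>
      Reg T p x \<le> - (1/20) * real T \<and> AgentReg bet_utility ar T p x \<ge> (1/20) * real T}"
    unfolding infinite_nat_iff_unbounded_le by blast
qed simp_all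

end
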